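(* Let $G\subseteq\mathrm{GL}_n(\mathbb R)$ be a Zariski-closed subgroup that is closed under transposes and under non-zero scalar multiples, let $G_{\mathrm{SL}}=\{g\in G:\det g=1\}$, and let $Y\in(\mathbb R^n)^m$. If the MLE given $Y$ for the Gaussian group model $\mathcal M_G$ exists uniquely, then the stabilizer $(G_{\mathrm{SL}})_Y$ of $Y$ under the diagonal action is compact.
   Context: The Gaussian group model is $\mathcal M_G=\{g^{T}g:g\in G\}$, the centered Gaussians on $\mathbb R^n$ with these concentration matrices. For $Y=(Y_1,\dots,Y_m)$, the log-likelihood is $l_Y(\Psi)=\frac m2\log\det\Psi-\frac12\mathrm{Tr}(\Psi\sum_iY_iY_i^T)$ on $\mathcal M_G$, and an MLE is a maximizer of $l_Y$ on $\mathcal M_G$. $G_{\mathrm{SL}}$ acts diagonally: $g\cdot Y=(gY_1,\dots,gY_m)$, and $(G_{\mathrm{SL}})_Y=\{g\in G_{\mathrm{SL}}: g\cdot Y=Y\}$, with the subspace topology from $\mathrm{GL}_n(\mathbb R)$. *)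

theory Defs
  imports "HOL-Analysis.Analysis"
begin

inductive matrix_poly :: "(real^'n^'n \<Rightarrow> real) \<Rightarrow> bool" where
  mp_const: "matrix_poly (\<lambda>A. c)"
| mp_entry: "matrix_poly (\<lambda>A. A $ i $ j)"
| mp_add: "matrix_poly p \<Longrightarrow> matrix_poly q \<Longrightarrow> matrix_poly (\<lambda>A. p A + q A)"
| mp_mult: "matrix_poly p \<Longrightarrow> matrix_poly q \<Longrightarrow> matrix_poly (\<lambda>A. p A * q A)"

definition GL :: "(real^'n^'n) set" where
  "GL = {A. invertible A}"

definition zariski_closed_in_GL :: "(real^'n^'n) set \<Rightarrow> bool" where
  "zariski_closed_in_GL G \<longleftrightarrow>
     (\<exists>P. (\<forall>p\<in>P. matrix_poly p) \<and> G = {A \<in> GL. \<forall>p\<in>P. p A = 0})"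

definition subgroup_GL :: "(real^'n^'n) set \<Rightarrow> bool" where
  "subgroup_GL G \<longleftrightarrow> G \<subseteq> GL \<and> mat 1 \<in> G \<and>
     (\<forall>g\<in>G. \<forall>h\<in>G. g ** h \<in> G) \<and> (\<forall>g\<in>G. matrix_inv g \<in> G)"

definition G_SL :: "(real^'n^'n) set \<Rightarrow> (real^'n^'n) set" where
  "G_SL G = {g \<in> G. det g = 1}"

text \<open>Gaussian group model: concentration matrices g^T g, g in G.\<close>
definition gaussian_group_model :: "(real^'n^'n) set \<Rightarrow> (real^'n^'n) set" where
  "gaussian_group_model G = {transpose g ** g | g. g \<in> G}"

text \<open>Sample covariance-type matrix  sum_i Y_i Y_i^T  for a sample Y_1..Y_m
  (indexed 0..m-1).\<close>
definition sample_mat :: "nat \<Rightarrow> (nat \<Rightarrow> real^'n) \<Rightarrow> real^'n^'n" where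
  "sample_mat m Y = (\<Sum>i<m. (\<chi> a b. Y i $ a * Y i $ b))"

definition loglik :: "nat \<Rightarrow> (nat \<Rightarrow> real^'n) \<Rightarrow> real^'n^'n \<Rightarrow> real" where
  "loglik m Y \<Psi> = real m / 2 * ln (det \<Psi>) - 1/2 * trace (\<Psi> ** sample_mat m Y)"

definition is_MLE :: "(real^'n^'n) set \<Rightarrow> nat \<Rightarrow> (nat \<Rightarrow> real^'n) \<Rightarrow> real^'n^'n \<Rightarrow> bool" where
  "is_MLE G m Y \<Psi> \<longleftrightarrow> \<Psi> \<in> gaussian_group_model G \<and>
     (\<forall>\<Phi>\<in>gaussian_group_model G. loglik m Y \<Phi> \<le> loglik m Y \<Psi>)"

definition stabilizer_SL :: "(real^'n^'n) set \<Rightarrow> nat \<Rightarrow> (nat \<Rightarrow> real^'n) \<Rightarrow> (real^'n^'n) set" where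
  "stabilizer_SL G m Y = {g \<in> G_SL G. \<forall>i<m. g *v Y i = Y i}"

end

theory Submission
  imports Defs
begin

text \<open>If \<open>\<Psi> = h\<^sup>T h\<close> is the unique MLE and \<open>g\<close> lies in the stabilizer, then
  \<open>g\<^sup>T \<Psi> g = (h g)\<^sup>T (h g)\<close> is again in the model and has the same likelihood: the
  determinant is unchanged because \<open>det g = 1\<close>, and the trace term is unchanged because
  \<open>g (\<Sum> Y\<^sub>i Y\<^sub>i\<^sup>T) g\<^sup>T = \<Sum> (g Y\<^sub>i)(g Y\<^sub>i)\<^sup>T\<close>. By uniqueness \<open>g\<^sup>T \<Psi> g = \<Psi>\<close>, i.e.
  \<open>h g h\<^sup>-\<^sup>1\<close> is orthogonal. So the stabilizer lies in a conjugate of the compact group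
  \<open>O(n)\<close>; it is also closed, being cut out by polynomial equations.\<close>

lemma continuous_on_matrix_poly: "matrix_poly p \<Longrightarrow> continuous_on UNIV p"
  by (induction rule: matrix_poly.induct) (auto intro!: continuous_intros)

lemma closed_G_SL:
  fixes G :: "(real^'n^'n) set"
  assumes "zariski_closed_in_GL G"
  shows "closed (G_SL G)"
proof -
  obtain P where P: "\<forall>p\<in>P. matrix_poly p" and G: "G = {A \<in> GL. \<forall>p\<in>P. p A = 0}"
    using assms unfolding zariski_closed_in_GL_def by blast
  have G_SL: "G_SL G = {g. det g = 1} \<inter> (\<Inter>p\<in>P. {g. p g = 0})"
    unfolding G_SL_def G GL_def by (auto simp: invertible_det_nz)
  have "closed {g::real^'n^'n. det g = 1}"
    unfolding det_def by (intro closed_Collect_eq continuous_intros)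
  moreover have "closed {g. p g = 0}" if "p \<in> P" for p
    using P that by (intro closed_Collect_eq continuous_on_matrix_poly continuous_on_const) auto
  ultimately show ?thesis
    unfolding G_SL by blast
qed

lemma closed_stabilizer_SL:
  fixes G :: "(real^'n^'n) set"
  assumes "zariski_closed_in_GL G"
  shows "closed (stabilizer_SL G m Y)"
proof -
  have stabilizer: "stabilizer_SL G m Y = G_SL G \<inter> (\<Inter>i<m. {g. g *v Y i = Y i})"
    unfolding stabilizer_SL_def by auto
  have "closed {g::real^'n^'n. g *v Y i = Y i}" for i
    unfolding matrix_vector_mult_def by (intro closed_Collect_eq continuous_intros)
  then show ?thesis
    unfolding stabilizer using closed_G_SL[OF assms] by blast
qed

lemma compact_orthogonal_matrices: "compact {Q::real^'n^'n. orthogonal_matrix Q}"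
  unfolding compact_eq_bounded_closed
proof (intro conjI)
  have "norm Q = sqrt (real CARD('n))" if "orthogonal_matrix Q" for Q :: "real^'n^'n"
  proof -
    have "norm (Q $ i) = 1" for i
      using that orthogonal_matrix_orthonormal_rows[of Q] by (metis row_def vec_lambda_eta)
    then show ?thesis
      by (simp add: norm_vec_def L2_set_def)
  qed
  then show "bounded {Q::real^'n^'n. orthogonal_matrix Q}"
    unfolding bounded_iff by auto
  show "closed {Q::real^'n^'n. orthogonal_matrix Q}"
    unfolding orthogonal_matrix matrix_matrix_mult_def transpose_def
    by (intro closed_Collect_eq continuous_intros)
qed

lemma compact_congruence_stabilizer:
  fixes h :: "real^'n^'n"
  assumes "invertible h"
  shows "compact {g. transpose g ** (transpose h ** h) ** g = transpose h ** h}"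
    (is "compact ?K")
proof -
  obtain h' where hh': "h ** h' = mat 1" "h' ** h = mat 1"
    using assms unfolding invertible_def by blast
  let ?conj = "\<lambda>k. h' ** k ** h"
  have K_sub: "?K \<subseteq> ?conj ` {Q. orthogonal_matrix Q}"
  proof
    fix g assume "g \<in> ?K"
    have "transpose (h ** g ** h') ** (h ** g ** h')
        = transpose h' ** (transpose g ** (transpose h ** h) ** g) ** h'"
      by (simp add: matrix_transpose_mul matrix_mul_assoc)
    also have "\<dots> = transpose h' ** (transpose h ** h) ** h'"
      using \<open>g \<in> ?K\<close> by simp
    also have "\<dots> = transpose (h ** h') ** (h ** h')"
      by (simp add: matrix_transpose_mul matrix_mul_assoc)
    also have "\<dots> = mat 1"
      by (simp add: hh' transpose_mat)
    finally have "orthogonal_matrix (h ** g ** h')"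
      by (simp add: orthogonal_matrix)
    moreover have "?conj (h ** g ** h') = (h' ** h) ** g ** (h' ** h)"
      by (simp add: matrix_mul_assoc)
    then have "g = ?conj (h ** g ** h')"
      using hh' by simp
    ultimately show "g \<in> ?conj ` {Q. orthogonal_matrix Q}" by blast
  qed
  have "continuous_on UNIV ?conj"
    unfolding matrix_matrix_mult_def by (intro continuous_intros)
  then have "compact (?conj ` {Q. orthogonal_matrix Q})"
    by (rule compact_continuous_image[OF continuous_on_subset compact_orthogonal_matrices]) simp
  moreover have "closed ?K"
    unfolding matrix_matrix_mult_def transpose_def
    by (intro closed_Collect_eq continuous_intros)
  ultimately have "compact (?conj ` {Q. orthogonal_matrix Q} \<inter> ?K)"
    by (rule compact_Int_closed)
  moreover have "?conj ` {Q. orthogonal_matrix Q} \<inter> ?K = ?K"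
    using K_sub by blast
  ultimately show ?thesis by simp
qed

lemma matrix_mul_sum_left:
  fixes A :: "'a::comm_semiring_1^'n^'m"
  shows "A ** sum f S = (\<Sum>i\<in>S. A ** f i)"
  by (induction S rule: infinite_finite_induct) (simp_all add: matrix_add_ldistrib)

lemma matrix_mul_sum_right:
  fixes A :: "'a::comm_semiring_1^'n^'m"
  shows "sum f S ** A = (\<Sum>i\<in>S. f i ** A)"
  by (simp add: vec_eq_iff matrix_matrix_mult_def sum_component sum_distrib_right sum.swap[where A = S])

lemma outer_product_congruence:
  fixes g :: "real^'n^'n"
  shows "g ** (\<chi> a b. x $ a * x $ b) ** transpose g = (\<chi> a b. (g *v x) $ a * (g *v x) $ b)"
  by (simp add: vec_eq_iff matrix_matrix_mult_def matrix_vector_mult_def transpose_def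
      sum_distrib_left sum_distrib_right mult_ac)

lemma sample_mat_congruence:
  fixes g :: "real^'n^'n"
  shows "g ** sample_mat m Y ** transpose g = sample_mat m (\<lambda>i. g *v Y i)"
  by (simp add: sample_mat_def matrix_mul_sum_left matrix_mul_sum_right outer_product_congruence)

lemma loglik_congruence:
  fixes g :: "real^'n^'n"
  assumes "\<bar>det g\<bar> = 1"
  shows "loglik m Y (transpose g ** \<Psi> ** g) = loglik m (\<lambda>i. g *v Y i) \<Psi>"
proof -
  have "det (transpose g ** \<Psi> ** g) = (det g * det g) * det \<Psi>"
    by (simp add: det_mul)
  also have "det g * det g = 1"
    using abs_mult_self_eq[of "det g"] assms by simp
  finally have det_eq: "det (transpose g ** \<Psi> ** g) = det \<Psi>" by simp
  have "trace (transpose g ** \<Psi> ** g ** sample_mat m Y)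
      = trace (transpose g ** (\<Psi> ** g ** sample_mat m Y))"
    by (simp only: matrix_mul_assoc)
  also have "\<dots> = trace (\<Psi> ** g ** sample_mat m Y ** transpose g)"
    by (rule trace_mul_sym)
  also have "\<dots> = trace (\<Psi> ** (g ** sample_mat m Y ** transpose g))"
    by (simp only: matrix_mul_assoc)
  finally show ?thesis
    using det_eq by (simp add: loglik_def sample_mat_congruence)
qed

lemma gaussian_group_model_congruence:
  assumes "subgroup_GL G" and "\<Psi> \<in> gaussian_group_model G" and "g \<in> G"
  shows "transpose g ** \<Psi> ** g \<in> gaussian_group_model G"
proof -
  obtain h where "h \<in> G" and "\<Psi> = transpose h ** h"
    using assms(2) unfolding gaussian_group_model_def by blast
  then have "transpose g ** \<Psi> ** g = transpose (h ** g) ** (h ** g)"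
    by (simp add: matrix_transpose_mul matrix_mul_assoc)
  moreover have "h ** g \<in> G"
    using assms(1,3) \<open>h \<in> G\<close> unfolding subgroup_GL_def by blast
  ultimately show ?thesis
    unfolding gaussian_group_model_def by blast
qed

lemma unique_MLE_stabilizer_invariant:
  assumes "subgroup_GL G" and "\<exists>!\<Psi>. is_MLE G m Y \<Psi>" and "is_MLE G m Y \<Psi>"
    and "g \<in> stabilizer_SL G m Y"
  shows "transpose g ** \<Psi> ** g = \<Psi>"
proof -
  have "g \<in> G" and "det g = 1" and fixes_Y: "\<forall>i<m. g *v Y i = Y i"
    using assms(4) unfolding stabilizer_SL_def G_SL_def by auto
  have "sample_mat m (\<lambda>i. g *v Y i) = sample_mat m Y"
    unfolding sample_mat_def using fixes_Y by simp
  then have "loglik m Y (transpose g ** \<Psi> ** g) = loglik m Y \<Psi>"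
    using loglik_congruence[of g m Y \<Psi>] \<open>det g = 1\<close> by (simp add: loglik_def)
  moreover have "transpose g ** \<Psi> ** g \<in> gaussian_group_model G"
    using gaussian_group_model_congruence assms(1,3) \<open>g \<in> G\<close> unfolding is_MLE_def by blast
  ultimately have "is_MLE G m Y (transpose g ** \<Psi> ** g)"
    using assms(3) unfolding is_MLE_def by simp
  then show ?thesis
    using assms(2,3) by blast
qed

theorem corollary2p4:
  fixes G :: "(real^'n^'n) set" and m :: nat and Y :: "nat \<Rightarrow> real^'n"
  assumes "subgroup_GL G"
    and "zariski_closed_in_GL G"
    and "\<forall>g\<in>G. transpose g \<in> G"
    and "\<forall>g\<in>G. \<forall>c::real. c \<noteq> 0 \<longrightarrow> c *\<^sub>R g \<in> G"
    and "\<exists>!\<Psi>. is_MLE G m Y \<Psi>"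
  shows "compact (stabilizer_SL G m Y)"
proof -
  obtain \<Psi> where mle: "is_MLE G m Y \<Psi>"
    using assms(5) by blast
  then obtain h where "h \<in> G" and \<Psi>: "\<Psi> = transpose h ** h"
    unfolding is_MLE_def gaussian_group_model_def by blast
  then have "invertible h"
    using assms(1) unfolding subgroup_GL_def GL_def by auto
  let ?K = "{g. transpose g ** \<Psi> ** g = \<Psi>}"
  have "compact ?K"
    unfolding \<Psi> using \<open>invertible h\<close> by (rule compact_congruence_stabilizer)
  moreover have "closed (stabilizer_SL G m Y)"
    using assms(2) by (rule closed_stabilizer_SL)
  ultimately have "compact (?K \<inter> stabilizer_SL G m Y)"
    by (rule compact_Int_closed)
  also have "?K \<inter> stabilizer_SL G m Y = stabilizer_SL G m Y"
    using unique_MLE_stabilizer_invariant[OF assms(1,5) mle] by blast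
  finally show ?thesis .
qed

end
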